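(* For $x$ sufficiently large, let $r=\pi\!\left(2\frac{\log x}{\log\log x}\right)$ and let $$\mathcal{A}(x)=\left\{(a_1,\dots,a_r)\in\mathbb{Z}_{\ge 0}^r:\ \sum_{j=1}^r a_j\log p_j\le\log x,\ \ a_i\ge \left\lfloor \frac{p_j}{p_i}\right\rfloor a_j \text{ for all } 1\le i<j\le r\right\}.$$ Then $\mathcal{J}(x)\le \#\mathcal{A}(x)$.
   Context: $p_1=2<p_2=3<\cdots$ is the sequence of primes and $\pi(y)$ the number of primes $\le y$. A positive integer $n$ is a Jordan-Pólya number if it can be written as a product of factorials, i.e. $n=a_1!\cdots a_s!$ for some $s\ge1$ and positive integers $a_i$; $\mathcal{J}(x)$ is the number of Jordan-Pólya numbers $\le x$. $\log$ is the natural logarithm. *)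

theory Defs
  imports "HOL-Computational_Algebra.Primes" "HOL-Library.Infinite_Set" Complex_Main
begin

text \<open>The j-th prime p_j, 1-indexed: p_1 = 2, p_2 = 3, ...\<close>
definition nth_prime :: "nat \<Rightarrow> nat" where
  "nth_prime j = enumerate {p::nat. prime p} (j - 1)"

definition prime_pi :: "real \<Rightarrow> nat" where
  "prime_pi y = card {p::nat. prime p \<and> real p \<le> y}"

definition jordan_polya :: "nat \<Rightarrow> bool" where
  "jordan_polya n \<longleftrightarrow> n > 0 \<and>
     (\<exists>as::nat list. as \<noteq> [] \<and> (\<forall>a\<in>set as. a > 0) \<and> n = prod_list (map fact as))"

definition JP_count :: "real \<Rightarrow> nat" where
  "JP_count x = card {n::nat. jordan_polya n \<and> real n \<le> x}"

text \<open>The set A(x); r-tuples are encoded as functions nat => nat supported on {1..r}.\<close>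
definition JP_A :: "real \<Rightarrow> (nat \<Rightarrow> nat) set" where
  "JP_A x = (let r = prime_pi (2 * ln x / ln (ln x)) in
     {a. (\<forall>i. i \<notin> {1..r} \<longrightarrow> a i = 0)
         \<and> (\<Sum>j=1..r. real (a j) * ln (real (nth_prime j))) \<le> ln x
         \<and> (\<forall>i j. 1 \<le> i \<and> i < j \<and> j \<le> r \<longrightarrow>
               a i \<ge> (nth_prime j div nth_prime i) * a j)})"

end

theory Submission
  imports Defs "HOL-Real_Asymp.Real_Asymp" "HOL-Library.FuncSet"
begin

text \<open>
  Send a Jordan-Polya number \<open>n \<le> x\<close> to its vector of prime exponents
  \<open>(v\<^sub>p\<^sub>1(n), \<dots>, v\<^sub>p\<^sub>r(n))\<close>. If a prime \<open>p\<close> divides \<open>n = a\<^sub>1! \<cdots> a\<^sub>s!\<close>, then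
  \<open>p \<le> a\<^sub>i\<close> for some \<open>i\<close>, so \<open>p! \<le> x\<close>; since \<open>log p! \<ge> p log p - p\<close> exceeds
  \<open>log x\<close> once \<open>p > 2 log x / log log x\<close>, all prime factors of \<open>n\<close> are among
  \<open>p\<^sub>1, \<dots>, p\<^sub>r\<close> and the map is injective. The image lies in \<open>\<A>(x)\<close>: the
  first condition is \<open>log n \<le> log x\<close>, and the second holds for a single
  factorial by Legendre's formula, since \<open>\<lfloor>q/p\<rfloor> \<lfloor>k/q\<^sup>e\<rfloor> \<le> \<lfloor>k/p\<^sup>e\<rfloor>\<close>, and is
  preserved under products because valuations are additive.
\<close>

lemma power_div_fact_le_exp:
  fixes x :: real
  assumes "x \<ge> 0"
  shows "x ^ n / fact n \<le> exp x"
proof -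
  have "(\<Sum>k\<in>{n}. x ^ k / fact k) \<le> (\<Sum>k. x ^ k / fact k)"
    using assms summable_exp_generic[of x]
    by (intro sum_le_suminf) (auto simp: divide_inverse ac_simps)
  also have "\<dots> = exp x" by (simp add: exp_def divide_inverse ac_simps)
  finally show ?thesis by simp
qed

lemma ln_fact_ge: "real n * ln (real n) - real n \<le> ln (fact n)"
proof (cases "n = 0")
  case False
  have "real n ^ n \<le> exp (real n) * fact n"
    using power_div_fact_le_exp[of "real n" n] by (simp add: divide_le_eq)
  hence "ln (real n ^ n) \<le> ln (exp (real n) * fact n)"
    using False by (subst ln_le_cancel_iff) auto
  also have "\<dots> = real n + ln (fact n)" by (simp add: ln_mult)
  finally show ?thesis by (simp add: ln_realpow)
qed simp

lemma x_ln_x_minus_x_mono: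
  fixes t y :: real
  assumes "1 \<le> y" "y \<le> t"
  shows "y * ln y - y \<le> t * ln t - t"
proof -
  have "ln (y / t) \<le> y / t - 1" using assms by (intro ln_le_minus_one) auto
  hence "t - y \<le> t * (ln t - ln y)" using assms by (simp add: ln_div field_simps)
  moreover have "0 \<le> (t - y) * ln y" using assms by simp
  ultimately show ?thesis by (simp add: algebra_simps)
qed

lemma card_prime_power_divisors_eq_multiplicity:
  fixes p n :: nat
  assumes "prime p" "n > 0"
  shows "card {e\<in>{1..n}. p ^ e dvd n} = multiplicity p n"
proof -
  define m where "m = multiplicity p n"
  have "p \<ge> 2" using assms(1) prime_ge_2_nat by blast
  have "p ^ m \<le> n" using assms(2) by (intro dvd_imp_le) (simp_all add: m_def multiplicity_dvd)
  moreover have "m < 2 ^ m" by (rule less_exp)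
  moreover have "2 ^ m \<le> p ^ m" using \<open>p \<ge> 2\<close> by (intro power_mono) auto
  ultimately have "m \<le> n" by linarith
  have dvd_iff: "p ^ e dvd n \<longleftrightarrow> e \<le> m" for e
    unfolding m_def using \<open>p \<ge> 2\<close> assms(2) by (intro power_dvd_iff_le_multiplicity) auto
  have "{e\<in>{1..n}. p ^ e dvd n} = {1..m}"
    unfolding dvd_iff using \<open>m \<le> n\<close> by auto
  thus ?thesis by (simp add: m_def)
qed

lemma multiplicity_fact:
  fixes p k :: nat
  assumes p: "prime p"
  shows "multiplicity p (fact k) = (\<Sum>e=1..k. k div p ^ e)"
proof (induction k)
  case 0
  then show ?case by simp
next
  case (Suc k)
  have "(fact (Suc k) :: nat) = Suc k * fact k" by (simp only: fact_Suc of_nat_id)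
  hence "multiplicity p (fact (Suc k) :: nat) = multiplicity p (Suc k) + multiplicity p (fact k :: nat)"
    using prime_elem_multiplicity_mult_distrib[OF prime_imp_prime_elem[OF p], of "Suc k" "fact k"]
    by (simp only: Suc_not_Zero fact_nonzero simp_thms)
  also have "multiplicity p (Suc k) = card {e\<in>{1..Suc k}. p ^ e dvd Suc k}"
    using card_prime_power_divisors_eq_multiplicity[OF p, of "Suc k"] by simp
  also have "\<dots> = (\<Sum>e=1..Suc k. if p ^ e dvd Suc k then 1 else 0)"
    by (subst card_eq_sum, rule sum.inter_filter) simp
  also have "multiplicity p (fact k :: nat) = (\<Sum>e=1..Suc k. k div p ^ e)"
  proof -
    have "k < 2 ^ Suc k" using less_exp[of "Suc k"] by linarith
    also have "(2::nat) ^ Suc k \<le> p ^ Suc k"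
      using prime_ge_2_nat[OF p] by (intro power_mono) auto
    finally have "k div p ^ Suc k = 0" by simp
    thus ?thesis using Suc.IH by (simp add: sum.cl_ivl_Suc)
  qed
  also have "(\<Sum>e=1..Suc k. if p ^ e dvd Suc k then 1 else 0) + (\<Sum>e=1..Suc k. k div p ^ e)
      = (\<Sum>e=1..Suc k. Suc k div p ^ e)"
    by (subst sum.distrib[symmetric], intro sum.cong) (simp_all add: div_Suc dvd_eq_mod_eq_0)
  finally show ?case .
qed

lemma div_mult_div_power_le:
  fixes p q k e :: nat
  assumes "p > 0" "e \<ge> 1"
  shows "(q div p) * (k div q ^ e) \<le> k div p ^ e"
proof -
  let ?c = "q div p"
  have "?c * p ^ e \<le> q ^ e"
  proof (cases "?c = 0")
    case False
    have "?c * p ^ e \<le> ?c ^ e * p ^ e" using False assms(2) by (simp add: self_le_power)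
    also have "\<dots> = (?c * p) ^ e" by (simp add: power_mult_distrib)
    also have "\<dots> \<le> q ^ e" by (intro power_mono) (simp_all add: div_times_less_eq_dividend)
    finally show ?thesis .
  qed simp
  hence "?c * (k div q ^ e) * p ^ e \<le> (k div q ^ e) * q ^ e"
    by (metis mult.assoc mult.commute mult_le_mono2)
  also have "\<dots> \<le> k" by (simp add: div_times_less_eq_dividend)
  finally show ?thesis using assms(1) by (simp add: less_eq_div_iff_mult_less_eq)
qed

definition valuations_dominated :: "nat \<Rightarrow> bool" where
  "valuations_dominated n \<longleftrightarrow> (\<forall>p q. prime p \<longrightarrow> prime q \<longrightarrow> p < q \<longrightarrow>
      (q div p) * multiplicity q n \<le> multiplicity p n)"

lemma valuations_dominated_fact: "valuations_dominated (fact k)"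
  unfolding valuations_dominated_def
proof (intro allI impI)
  fix p q :: nat assume p: "prime p" and q: "prime q" and "p < q"
  have "(q div p) * multiplicity q (fact k :: nat) = (\<Sum>e=1..k. (q div p) * (k div q ^ e))"
    by (simp add: multiplicity_fact[OF q] sum_distrib_left)
  also have "\<dots> \<le> (\<Sum>e=1..k. k div p ^ e)"
    using p by (intro sum_mono div_mult_div_power_le) (auto simp: prime_gt_0_nat)
  also have "\<dots> = multiplicity p (fact k :: nat)" by (simp add: multiplicity_fact[OF p])
  finally show "(q div p) * multiplicity q (fact k :: nat) \<le> multiplicity p (fact k :: nat)" .
qed

lemma valuations_dominated_mult:
  assumes "n \<noteq> 0" "m \<noteq> 0" "valuations_dominated n" "valuations_dominated m"
  shows "valuations_dominated (n * m)"
  unfolding valuations_dominated_def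
proof (intro allI impI)
  fix p q :: nat assume p: "prime p" and q: "prime q" and "p < q"
  have "q div p * multiplicity q n \<le> multiplicity p n"
    and "q div p * multiplicity q m \<le> multiplicity p m"
    using assms(3,4) p q \<open>p < q\<close> unfolding valuations_dominated_def by blast+
  thus "q div p * multiplicity q (n * m) \<le> multiplicity p (n * m)"
    using assms(1,2) p q
    by (simp add: prime_elem_multiplicity_mult_distrib add_mult_distrib2)
qed

lemma valuations_dominated_prod_list_fact:
  "valuations_dominated (prod_list (map fact as :: nat list))"
proof (induction as)
  case Nil
  then show ?case by (simp add: valuations_dominated_def)
next
  case (Cons a as)
  have "prod_list (map fact as :: nat list) \<noteq> 0" by (induction as) auto
  then show ?case
    using Cons.IH valuations_dominated_mult valuations_dominated_fact by simp
qed

lemma prime_dvd_prod_list_fact: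
  fixes p :: nat
  assumes "prime p" "p dvd prod_list (map fact as)"
  shows "\<exists>a\<in>set as. p \<le> a"
  using assms by (induction as) (auto simp: prime_dvd_mult_iff prime_dvd_fact_iff)

lemma fact_dvd_prod_list_fact: "a \<in> set as \<Longrightarrow> (fact a :: nat) dvd prod_list (map fact as)"
  by (induction as) auto

lemma prime_nth_prime: "prime (nth_prime i)"
  unfolding nth_prime_def using enumerate_in_set[OF primes_infinite] by blast

lemma nth_prime_strict_mono: "1 \<le> i \<Longrightarrow> i < j \<Longrightarrow> nth_prime i < nth_prime j"
  unfolding nth_prime_def by (intro enumerate_mono[OF _ primes_infinite]) simp

lemma inj_on_nth_prime: "inj_on nth_prime {1..r}"
  by (rule inj_onI) (metis atLeastAtMost_iff less_irrefl nat_neq_iff nth_prime_strict_mono)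

lemma prime_eq_nth_prime:
  assumes p: "prime p" and "real p \<le> y"
  shows "\<exists>i\<in>{1..prime_pi y}. nth_prime i = p"
proof -
  let ?P = "{p::nat. prime p}"
  obtain n where n: "enumerate ?P n = p" using enumerate_Ex[OF primes_infinite] p by blast
  have fin: "finite {q::nat. prime q \<and> real q \<le> y}"
    by (rule finite_subset[of _ "{..nat \<lfloor>y\<rfloor>}"]) (auto intro: le_nat_floor)
  have inj: "inj_on (enumerate ?P) {..n}"
    using strict_mono_enumerate[OF primes_infinite] by (simp add: strict_mono_imp_inj_on)
  have "enumerate ?P m \<in> {q. prime q \<and> real q \<le> y}" if "m \<le> n" for m
  proof -
    have "enumerate ?P m \<le> p" using that n enumerate_mono_le_iff[OF primes_infinite] by blast
    thus ?thesis using assms(2) enumerate_in_set[OF primes_infinite, of m] by simp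
  qed
  hence "enumerate ?P ` {..n} \<subseteq> {q::nat. prime q \<and> real q \<le> y}" by auto
  hence "card (enumerate ?P ` {..n}) \<le> prime_pi y"
    unfolding prime_pi_def using fin by (rule card_mono[rotated])
  hence "Suc n \<le> prime_pi y" using card_image[OF inj] by simp
  thus ?thesis using n by (intro bexI[of _ "Suc n"]) (simp_all add: nth_prime_def)
qed

lemma ln_eq_sum_prime_factors:
  fixes n :: nat
  assumes "n > 0"
  shows "ln (real n) = (\<Sum>p\<in>prime_factors n. real (multiplicity p n) * ln (real p))"
proof -
  have pos: "real p > 0" if "p \<in> prime_factors n" for p
    using that by (simp add: in_prime_factors_iff prime_gt_0_nat)
  have "real n = (\<Prod>p\<in>prime_factors n. real p ^ multiplicity p n)"
    using prod_prime_factors[of n] assms by (simp flip: of_nat_prod of_nat_power)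
  also have "ln \<dots> = (\<Sum>p\<in>prime_factors n. ln (real p ^ multiplicity p n))"
    using pos by (intro ln_prod) auto
  finally show ?thesis using pos by (simp add: ln_realpow)
qed

definition nth_prime_exponents :: "nat \<Rightarrow> nat \<Rightarrow> nat \<Rightarrow> nat" where
  "nth_prime_exponents r n i = (if i \<in> {1..r} then multiplicity (nth_prime i) n else 0)"

lemma sum_nth_prime_exponents_ln:
  fixes n :: nat
  assumes "n > 0" and small: "\<And>p. prime p \<Longrightarrow> p dvd n \<Longrightarrow> real p \<le> y"
  shows "(\<Sum>j=1..prime_pi y. real (nth_prime_exponents (prime_pi y) n j) * ln (real (nth_prime j)))
    = ln (real n)"
proof -
  define g where "g p = real (multiplicity p n) * ln (real p)" for p
  have "prime_factors n \<subseteq> nth_prime ` {1..prime_pi y}"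
  proof
    fix p assume "p \<in> prime_factors n"
    hence "prime p" "real p \<le> y" using small by (auto simp: in_prime_factors_iff)
    thus "p \<in> nth_prime ` {1..prime_pi y}" using prime_eq_nth_prime by (metis imageI)
  qed
  moreover have "g p = 0" if "p \<in> nth_prime ` {1..prime_pi y} - prime_factors n" for p
    using that assms(1) prime_nth_prime
    by (auto simp: g_def in_prime_factors_iff not_dvd_imp_multiplicity_0)
  ultimately have "sum g (nth_prime ` {1..prime_pi y}) = sum g (prime_factors n)"
    by (intro sum.mono_neutral_right) auto
  moreover have "(\<Sum>j=1..prime_pi y. real (nth_prime_exponents (prime_pi y) n j) * ln (real (nth_prime j)))
      = sum g (nth_prime ` {1..prime_pi y})"
    unfolding sum.reindex[OF inj_on_nth_prime]
    by (intro sum.cong) (simp_all add: g_def nth_prime_exponents_def)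
  ultimately show ?thesis
    using ln_eq_sum_prime_factors[OF assms(1)] by (simp add: g_def)
qed

lemma inj_on_nth_prime_exponents:
  "inj_on (nth_prime_exponents (prime_pi y))
     {n. n > 0 \<and> (\<forall>p. prime p \<longrightarrow> p dvd n \<longrightarrow> real p \<le> y)}"
proof (rule inj_onI)
  fix n m
  assume n: "n \<in> {n. n > 0 \<and> (\<forall>p. prime p \<longrightarrow> p dvd n \<longrightarrow> real p \<le> y)}"
    and m: "m \<in> {n. n > 0 \<and> (\<forall>p. prime p \<longrightarrow> p dvd n \<longrightarrow> real p \<le> y)}"
    and eq: "nth_prime_exponents (prime_pi y) n = nth_prime_exponents (prime_pi y) m"
  have "multiplicity p n = multiplicity p m" if p: "prime p" for p
  proof (cases "p dvd n \<or> p dvd m")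
    case True
    then obtain i where "i \<in> {1..prime_pi y}" "nth_prime i = p"
      using prime_eq_nth_prime[OF p] n m p by blast
    thus ?thesis using fun_cong[OF eq, of i] by (simp add: nth_prime_exponents_def)
  qed (simp add: not_dvd_imp_multiplicity_0)
  hence "normalize n = normalize m" using n m by (intro multiplicity_eq_imp_eq) auto
  thus "n = m" by simp
qed

lemma JP_A_finite:
  assumes "x > 1"
  shows "finite (JP_A x)"
proof -
  define r where "r = prime_pi (2 * ln x / ln (ln x))"
  define B where "B = nat \<lfloor>ln x / ln 2\<rfloor>"
  have bound: "a i \<le> B" if a: "a \<in> JP_A x" for a i
  proof (cases "i \<in> {1..r}")
    case True
    have ge2: "real (nth_prime j) \<ge> 2" for j
      using prime_ge_2_nat[OF prime_nth_prime] by (metis of_nat_le_iff of_nat_numeral)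
    have "real (a i) * ln 2 \<le> real (a i) * ln (real (nth_prime i))"
      using ge2[of i] by (intro mult_left_mono) auto
    also have "\<dots> \<le> (\<Sum>j=1..r. real (a j) * ln (real (nth_prime j)))"
      using True ge2
      by (intro member_le_sum) (auto intro!: mult_nonneg_nonneg ln_ge_zero order.trans[OF _ ge2])
    also have "\<dots> \<le> ln x" using a unfolding JP_A_def r_def Let_def by auto
    finally have "real (a i) \<le> ln x / ln 2" by (simp add: le_divide_eq)
    thus ?thesis unfolding B_def by (rule le_nat_floor)
  next
    case False
    thus ?thesis using a unfolding JP_A_def r_def Let_def by auto
  qed
  have "JP_A x \<subseteq> (\<lambda>g i. if i \<in> {1..r} then g i else 0) ` PiE {1..r} (\<lambda>_. {..B})"
  proof
    fix a assume a: "a \<in> JP_A x"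
    hence "a = (\<lambda>i. if i \<in> {1..r} then restrict a {1..r} i else 0)"
      unfolding JP_A_def r_def Let_def by (auto simp: fun_eq_iff)
    moreover have "restrict a {1..r} \<in> PiE {1..r} (\<lambda>_. {..B})" using bound[OF a] by auto
    ultimately show "a \<in> (\<lambda>g i. if i \<in> {1..r} then g i else 0) ` PiE {1..r} (\<lambda>_. {..B})"
      by blast
  qed
  thus ?thesis by (rule finite_subset) (intro finite_imageI finite_PiE; simp)
qed

lemma jordan_polya_prime_factor_le:
  fixes x y :: real
  assumes "jordan_polya n" "real n \<le> x" "prime p" "p dvd n"
    and "1 \<le> y" "ln x < y * ln y - y"
  shows "real p \<le> y"
proof (rule ccontr)
  assume "\<not> real p \<le> y"
  obtain as where as: "n = prod_list (map fact as)" and "n > 0"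
    using assms(1) unfolding jordan_polya_def by blast
  obtain a where a: "a \<in> set as" "p \<le> a"
    using prime_dvd_prod_list_fact assms(3,4) as by blast
  have "(fact p :: nat) \<le> fact a" using a(2) by (rule fact_mono)
  also have "\<dots> \<le> n" using fact_dvd_prod_list_fact[OF a(1)] as \<open>n > 0\<close> by (simp add: dvd_imp_le)
  finally have "fact p \<le> x" using assms(2) by (metis of_nat_fact of_nat_le_iff order.trans)
  hence "ln (fact p) \<le> ln x" by (rule ln_mono) simp
  moreover have "y * ln y - y \<le> real p * ln (real p) - real p"
    using x_ln_x_minus_x_mono assms(5) \<open>\<not> real p \<le> y\<close> by simp
  ultimately show False using ln_fact_ge[of p] assms(6) by simp
qed

lemma nth_prime_exponents_in_JP_A:
  fixes x :: real
  defines "y \<equiv> 2 * ln x / ln (ln x)"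
  assumes "jordan_polya n" "real n \<le> x"
    and small: "\<And>p. prime p \<Longrightarrow> p dvd n \<Longrightarrow> real p \<le> y"
  shows "nth_prime_exponents (prime_pi y) n \<in> JP_A x"
proof -
  obtain as where as: "n = prod_list (map fact as)" and "n > 0"
    using assms(2) unfolding jordan_polya_def by blast
  have dominated: "valuations_dominated n"
    using as valuations_dominated_prod_list_fact by simp
  have "(\<Sum>j=1..prime_pi y. real (nth_prime_exponents (prime_pi y) n j) * ln (real (nth_prime j)))
      \<le> ln x"
    using sum_nth_prime_exponents_ln[OF \<open>n > 0\<close> small] assms(3) \<open>n > 0\<close> by simp
  moreover have "(nth_prime j div nth_prime i) * multiplicity (nth_prime j) n
      \<le> multiplicity (nth_prime i) n" if "1 \<le> i" "i < j" for i j
    using dominated nth_prime_strict_mono[OF that] prime_nth_prime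
    unfolding valuations_dominated_def by blast
  ultimately show ?thesis
    unfolding JP_A_def Let_def y_def[symmetric] by (auto simp: nth_prime_exponents_def)
qed

lemma JP_count_le_card_JP_A:
  fixes x :: real
  defines "y \<equiv> 2 * ln x / ln (ln x)"
  assumes "x > 1" "1 \<le> y" "ln x < y * ln y - y"
  shows "JP_count x \<le> card (JP_A x)"
proof -
  let ?S = "{n::nat. jordan_polya n \<and> real n \<le> x}"
  have small: "real p \<le> y" if "n \<in> ?S" "prime p" "p dvd n" for n p
    using jordan_polya_prime_factor_le that assms(3,4) by blast
  have "inj_on (nth_prime_exponents (prime_pi y)) ?S"
    by (rule inj_on_subset[OF inj_on_nth_prime_exponents])
      (use small in \<open>auto simp: jordan_polya_def\<close>)
  moreover have "nth_prime_exponents (prime_pi y) ` ?S \<subseteq> JP_A x"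
    using nth_prime_exponents_in_JP_A small unfolding y_def by blast
  ultimately show ?thesis
    unfolding JP_count_def using card_inj_on_le JP_A_finite[OF assms(2)] by blast
qed

theorem mainTheorem6:
  shows "\<exists>x0::real. \<forall>x\<ge>x0. JP_count x \<le> card (JP_A x)"
proof -
  have "eventually (\<lambda>x::real. x > 1) at_top"
    and "eventually (\<lambda>x::real. 1 \<le> 2 * ln x / ln (ln x)) at_top"
    and "eventually (\<lambda>x::real. ln x < (2 * ln x / ln (ln x)) * ln (2 * ln x / ln (ln x))
                                   - 2 * ln x / ln (ln x)) at_top"
    by real_asymp+
  hence "eventually (\<lambda>x. JP_count x \<le> card (JP_A x)) at_top"
    by eventually_elim (rule JP_count_le_card_JP_A)
  thus ?thesis unfolding eventually_at_top_linorder by blast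
qed

end
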